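(* For every integer $n\ge 1$, let $T_n$ be the triangular grid graph with $n$ rows of triangles and let $a,b$ be two distinct vertices of $T_n$ of degree $2$. Then, with unit edge resistances, \[ r_{T_n}(a,b)\ \ge\ \frac12\left(1+\frac12+\frac13+\cdots+\frac1n\right). \] In particular $r_{T_n}(a,b)\to\infty$ as $n\to\infty$.
   Context: The triangular grid graph $T_n$ has vertex set $\{(i,j): 0\le j\le i\le n\}$ (so $(n+1)(n+2)/2$ vertices, arranged in rows $i=0,\dots,n$), and edges $\{(i,j),(i,j+1)\}$, $\{(i,j),(i+1,j)\}$ and $\{(i,j),(i+1,j+1)\}$ whenever both endpoints are vertices. Its degree-2 vertices are the three corners $(0,0)$, $(n,0)$, $(n,n)$. Each edge has resistance $1$. The resistance distance $r_G(u,v)$ is the potential difference between $u$ and $v$ when one unit of current enters at $u$ and leaves at $v$; equivalently $r_G(u,v)=(\mathbf e_u-\mathbf e_v)^T L^\dagger(\mathbf e_u-\mathbf e_v)$ with $L$ the combinatorial Laplacian of $G$. *)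

theory Defs
  imports Main Complex_Main
begin

text \<open>A finite graph is given by a vertex set V and a symmetric adjacency relation E.
  All edges have unit resistance.\<close>

definition nbrs :: "'v set \<Rightarrow> ('v \<Rightarrow> 'v \<Rightarrow> bool) \<Rightarrow> 'v \<Rightarrow> 'v set" where
  "nbrs V E v = {w \<in> V. E v w}"

definition gdegree :: "'v set \<Rightarrow> ('v \<Rightarrow> 'v \<Rightarrow> bool) \<Rightarrow> 'v \<Rightarrow> nat" where
  "gdegree V E v = card (nbrs V E v)"

definition laplacian :: "'v set \<Rightarrow> ('v \<Rightarrow> 'v \<Rightarrow> bool) \<Rightarrow> ('v \<Rightarrow> real) \<Rightarrow> 'v \<Rightarrow> real" where
  "laplacian V E phi v = (\<Sum>w\<in>nbrs V E v. phi v - phi w)"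

text \<open>phi is a potential for the flow of one unit of current entering at a and leaving at b
  (Kirchhoff + Ohm with unit resistances): L phi = e_a - e_b.\<close>
definition unit_current_potential ::
  "'v set \<Rightarrow> ('v \<Rightarrow> 'v \<Rightarrow> bool) \<Rightarrow> 'v \<Rightarrow> 'v \<Rightarrow> ('v \<Rightarrow> real) \<Rightarrow> bool" where
  "unit_current_potential V E a b phi \<longleftrightarrow>
     (\<forall>v\<in>V. laplacian V E phi v = (if v = a then 1 else if v = b then -1 else 0))"

text \<open>Resistance distance: the potential difference between a and b (well defined for
  connected graphs, as solutions differ by constants on connected graphs).\<close>
definition resistance :: "'v set \<Rightarrow> ('v \<Rightarrow> 'v \<Rightarrow> bool) \<Rightarrow> 'v \<Rightarrow> 'v \<Rightarrow> real" where
  "resistance V E a b =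
     (let phi = (SOME phi. unit_current_potential V E a b phi) in phi a - phi b)"

definition tri_V :: "nat \<Rightarrow> (nat \<times> nat) set" where
  "tri_V n = {(i, j). j \<le> i \<and> i \<le> n}"

definition tri_E :: "nat \<Rightarrow> nat \<times> nat \<Rightarrow> nat \<times> nat \<Rightarrow> bool" where
  "tri_E n u v \<longleftrightarrow> u \<in> tri_V n \<and> v \<in> tri_V n \<and>
     ((fst v = fst u \<and> snd v = snd u + 1) \<or> (fst u = fst v \<and> snd u = snd v + 1) \<or>
      (fst v = fst u + 1 \<and> snd v = snd u) \<or> (fst u = fst v + 1 \<and> snd u = snd v) \<or>
      (fst v = fst u + 1 \<and> snd v = snd u + 1) \<or> (fst u = fst v + 1 \<and> snd u = snd v + 1))"

end

theory Submission
  imports Defs "Jordan_Normal_Form.Determinant" "HOL-Analysis.Convex"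
begin

text \<open>The potential drop of a unit current equals its energy, a sum of squared potential
  differences over the edges. If a function f on the vertices changes by at most one along every
  edge, the edges between its levels k - 1 and k form disjoint cuts separating a from b; each of
  them carries the whole unit current, so by Cauchy-Schwarz its energy is at least the inverse of
  its size (the Nash-Williams inequality). In T_n the three corners are separated either by the
  rows (when one of them is the apex) or by the diagonals parallel to the left side, and the k-th
  cut has at most 2k edges, which gives the bound H_n / 2.\<close>

section \<open>Solving square linear systems\<close>

lemma mat_vec_solvable_if_kernel_trivial:
  fixes A :: "'a :: field mat"
  assumes A: "A \<in> carrier_mat N N"
    and ker: "\<And>x. x \<in> carrier_vec N \<Longrightarrow> A *\<^sub>v x = 0\<^sub>v N \<Longrightarrow> x = 0\<^sub>v N"
    and r: "r \<in> carrier_vec N"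
  shows "\<exists>x\<in>carrier_vec N. A *\<^sub>v x = r"
proof -
  have "det A \<noteq> 0"
    using det_0_iff_vec_prod_zero_field[OF A] ker by blast
  define x where "x = (1 / det A) \<cdot>\<^sub>v (adj_mat A *\<^sub>v r)"
  have x: "x \<in> carrier_vec N"
    unfolding x_def using adj_mat(1)[OF A] r by simp
  have "A *\<^sub>v x = (1 / det A) \<cdot>\<^sub>v ((A * adj_mat A) *\<^sub>v r)"
    unfolding x_def using adj_mat(1)[OF A] A r by (simp add: mult_mat_vec assoc_mult_mat_vec)
  also have "\<dots> = (1 / det A) \<cdot>\<^sub>v ((det A \<cdot>\<^sub>m 1\<^sub>m N) *\<^sub>v r)"
    using adj_mat(2)[OF A] by simp
  also have "\<dots> = r"
    using \<open>det A \<noteq> 0\<close> r by (intro eq_vecI) auto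
  finally show ?thesis using x by blast
qed

lemma finite_linear_system_solvable:
  fixes c :: "'v \<Rightarrow> 'v \<Rightarrow> 'a :: field" and I :: "'v set"
  assumes fin: "finite I"
    and inj: "\<And>phi. \<forall>v\<in>I. (\<Sum>w\<in>I. c v w * phi w) = 0 \<Longrightarrow> \<forall>v\<in>I. phi v = 0"
  shows "\<exists>phi. \<forall>v\<in>I. (\<Sum>w\<in>I. c v w * phi w) = r v"
proof -
  define N where "N = card I"
  obtain h where h: "bij_betw h {0..<N} I"
    using ex_bij_betw_nat_finite[OF fin] N_def by blast
  define g where "g = inv_into {0..<N} h"
  have hg: "\<And>w. w \<in> I \<Longrightarrow> h (g w) = w" "\<And>w. w \<in> I \<Longrightarrow> g w < N"
    using h unfolding g_def by (auto simp: bij_betw_def f_inv_into_f inv_into_into)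
  have gh: "\<And>j. j < N \<Longrightarrow> g (h j) = j" and hI: "\<And>j. j < N \<Longrightarrow> h j \<in> I"
    using h unfolding g_def bij_betw_def by auto
  define A where "A = mat N N (\<lambda>(i, j). c (h i) (h j))"
  have A: "A \<in> carrier_mat N N"
    unfolding A_def by simp
  have system_as_matrix: "(\<Sum>w\<in>I. c v w * x $ g w) = (A *\<^sub>v x) $ g v"
    if "x \<in> carrier_vec N" "v \<in> I" for x v
  proof -
    have "(\<Sum>w\<in>I. c v w * x $ g w) = (\<Sum>j\<in>{0..<N}. c v (h j) * x $ j)"
      using sum.reindex[of h "{0..<N}" "\<lambda>w. c v w * x $ g w"] h gh
      by (simp add: bij_betw_def)
    then show ?thesis
      using that unfolding A_def by (simp add: hg mult_mat_vec_def scalar_prod_def)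
  qed
  have "\<exists>x\<in>carrier_vec N. A *\<^sub>v x = vec N (\<lambda>i. r (h i))"
  proof (rule mat_vec_solvable_if_kernel_trivial[OF A])
    fix x :: "'a vec"
    assume x: "x \<in> carrier_vec N" "A *\<^sub>v x = 0\<^sub>v N"
    have "\<forall>v\<in>I. (\<Sum>w\<in>I. c v w * x $ g w) = 0"
      using x hg by (simp add: system_as_matrix)
    then have "\<forall>v\<in>I. x $ g v = 0"
      by (rule inj)
    then have "x $ j = 0" if "j < N" for j
      using hI[OF that] gh[OF that] by force
    then show "x = 0\<^sub>v N"
      using x(1) by (intro eq_vecI) auto
  qed simp
  then obtain x where "x \<in> carrier_vec N" "A *\<^sub>v x = vec N (\<lambda>i. r (h i))"
    by blast
  then have "\<forall>v\<in>I. (\<Sum>w\<in>I. c v w * x $ g w) = r v"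
    using hg by (simp add: system_as_matrix)
  then show ?thesis
    by (intro exI[of _ "\<lambda>w. x $ g w"])
qed

section \<open>Arcs, cuts and the energy of a potential\<close>

definition arcs :: "'v set \<Rightarrow> ('v \<Rightarrow> 'v \<Rightarrow> bool) \<Rightarrow> 'v set \<Rightarrow> ('v \<times> 'v) set" where
  "arcs V E S = {(v, w). v \<in> S \<and> w \<in> V \<and> E v w}"

definition cut_arcs :: "'v set \<Rightarrow> ('v \<Rightarrow> 'v \<Rightarrow> bool) \<Rightarrow> 'v set \<Rightarrow> ('v \<times> 'v) set" where
  "cut_arcs V E S = {(v, w). v \<in> S \<and> w \<in> V - S \<and> E v w}"

lemma finite_arcs: "finite S \<Longrightarrow> finite V \<Longrightarrow> finite (arcs V E S)"
  by (rule finite_subset[of _ "S \<times> V"]) (auto simp: arcs_def)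

lemma cut_arcs_subset_arcs: "S \<subseteq> V \<Longrightarrow> cut_arcs V E S \<subseteq> arcs V E V"
  by (auto simp: cut_arcs_def arcs_def)

lemma sum_nbrs_eq_sum_arcs:
  assumes "finite V" "S \<subseteq> V"
  shows "(\<Sum>v\<in>S. \<Sum>w\<in>nbrs V E v. F v w) = (\<Sum>(v, w)\<in>arcs V E S. F v w)"
proof -
  have "(\<Sum>v\<in>S. \<Sum>w\<in>nbrs V E v. F v w) = (\<Sum>(v, w)\<in>Sigma S (nbrs V E). F v w)"
    using assms by (intro sum.Sigma) (auto simp: nbrs_def intro: finite_subset)
  also have "Sigma S (nbrs V E) = arcs V E S"
    using assms(2) by (auto simp: nbrs_def arcs_def)
  finally show ?thesis .
qed

lemma sum_arcs_swap:
  assumes sym: "\<And>u v. E u v \<longleftrightarrow> E v u"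
  shows "(\<Sum>(v, w)\<in>arcs S E S. F v w) = (\<Sum>(v, w)\<in>arcs S E S. F w v)"
proof -
  have "inj_on prod.swap (arcs S E S)" "prod.swap ` arcs S E S = arcs S E S"
    using sym by (auto simp: arcs_def image_iff)
  then show ?thesis
    using sum.reindex[of prod.swap "arcs S E S" "\<lambda>(v, w). F v w"]
    by (simp add: case_prod_unfold)
qed

lemma sum_laplacian_eq_cut_flow:
  assumes fin: "finite V" and S: "S \<subseteq> V" and sym: "\<And>u v. E u v \<longleftrightarrow> E v u"
  shows "(\<Sum>v\<in>S. laplacian V E phi v) = (\<Sum>(v, w)\<in>cut_arcs V E S. phi v - phi w)"
proof -
  have finS: "finite S"
    using fin S finite_subset by blast
  have inner_flow: "(\<Sum>(v, w)\<in>arcs S E S. phi v - phi w) = 0"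
  proof -
    have "(\<Sum>(v, w)\<in>arcs S E S. phi v - phi w) = (\<Sum>(v, w)\<in>arcs S E S. phi w - phi v)"
      by (rule sum_arcs_swap[OF sym])
    also have "\<dots> = - (\<Sum>(v, w)\<in>arcs S E S. phi v - phi w)"
      by (simp add: case_prod_unfold flip: sum_negf)
    finally show ?thesis by simp
  qed
  have "arcs V E S = arcs S E S \<union> cut_arcs V E S"
    using S by (auto simp: arcs_def cut_arcs_def)
  moreover have "arcs S E S \<inter> cut_arcs V E S = {}"
    by (auto simp: arcs_def cut_arcs_def)
  moreover have "finite (cut_arcs V E S)"
    using finite_subset[OF cut_arcs_subset_arcs[OF S] finite_arcs[OF fin fin]] .
  ultimately have "(\<Sum>(v, w)\<in>arcs V E S. phi v - phi w) =
      (\<Sum>(v, w)\<in>arcs S E S. phi v - phi w) + (\<Sum>(v, w)\<in>cut_arcs V E S. phi v - phi w)"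
    using finite_arcs[OF finS finS] by (simp add: sum.union_disjoint)
  then show ?thesis
    unfolding laplacian_def sum_nbrs_eq_sum_arcs[OF fin S] inner_flow by simp
qed

lemma sum_mult_laplacian_eq_energy:
  assumes fin: "finite V" and sym: "\<And>u v. E u v \<longleftrightarrow> E v u"
  shows "(\<Sum>v\<in>V. psi v * laplacian V E phi v) =
     (1/2) * (\<Sum>(v, w)\<in>arcs V E V. (psi v - psi w) * (phi v - phi w))"
proof -
  have "(\<Sum>v\<in>V. psi v * laplacian V E phi v) = (\<Sum>(v, w)\<in>arcs V E V. psi v * (phi v - phi w))"
    unfolding laplacian_def sum_distrib_left by (rule sum_nbrs_eq_sum_arcs[OF fin]) simp
  moreover have "(\<Sum>(v, w)\<in>arcs V E V. psi v * (phi v - phi w)) =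
      (\<Sum>(v, w)\<in>arcs V E V. psi w * (phi w - phi v))"
    by (rule sum_arcs_swap[OF sym])
  moreover have "(\<Sum>(v, w)\<in>arcs V E V. (psi v - psi w) * (phi v - phi w)) =
      (\<Sum>(v, w)\<in>arcs V E V. psi v * (phi v - phi w)) + (\<Sum>(v, w)\<in>arcs V E V. psi w * (phi w - phi v))"
    by (simp add: case_prod_unfold algebra_simps flip: sum.distrib)
  ultimately show ?thesis by simp
qed

section \<open>Unit current potentials\<close>

text \<open>Connectedness is expressed by requiring every function that is constant along edges to be
  constant.\<close>

lemma unit_current_potential_exists:
  assumes fin: "finite V" and sym: "\<And>u v. E u v \<longleftrightarrow> E v u"
    and aV: "a \<in> V" and bV: "b \<in> V" and ab: "a \<noteq> b"
    and conn: "\<And>psi :: _ \<Rightarrow> real. \<forall>v\<in>V. \<forall>w\<in>V. E v w \<longrightarrow> psi v = psi w \<Longrightarrow>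
      \<forall>v\<in>V. psi v = psi b"
  shows "\<exists>phi. unit_current_potential V E a b phi"
proof -
  text \<open>The Laplacian with its row at b replaced by the condition phi b = 0 is invertible.\<close>
  define c where "c v w = (if v = b then (if w = b then 1 else 0)
     else (if w = v then real (card (nbrs V E v)) else 0) - (if E v w then 1 else 0))" for v w
  have grounded_laplacian: "(\<Sum>w\<in>V. c v w * phi w) = (if v = b then phi b else laplacian V E phi v)"
    if v: "v \<in> V" for phi v
  proof (cases "v = b")
    case True
    have "(\<Sum>w\<in>V. c v w * phi w) = (\<Sum>w\<in>V. if w = b then phi b else 0)"
      by (intro sum.cong) (auto simp: c_def True)
    with bV fin True show ?thesis by simp
  next
    case False
    have "(\<Sum>w\<in>V. c v w * phi w) = (\<Sum>w\<in>V. if w = v then real (card (nbrs V E v)) * phi w else 0)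
        - (\<Sum>w\<in>V. if E v w then phi w else 0)"
      unfolding sum_subtractf[symmetric] by (intro sum.cong) (auto simp: c_def False algebra_simps)
    also have "\<dots> = real (card (nbrs V E v)) * phi v - (\<Sum>w\<in>nbrs V E v. phi w)"
      using v fin by (simp add: nbrs_def sum.inter_filter)
    also have "\<dots> = laplacian V E phi v"
      by (simp add: laplacian_def sum_subtractf)
    finally show ?thesis using False by simp
  qed
  have "\<exists>phi. \<forall>v\<in>V. (\<Sum>w\<in>V. c v w * phi w) = of_bool (v = a)"
  proof (rule finite_linear_system_solvable[OF fin])
    fix psi :: "_ \<Rightarrow> real"
    assume zero: "\<forall>v\<in>V. (\<Sum>w\<in>V. c v w * psi w) = 0"
    have psi_b: "psi b = 0"
      using zero grounded_laplacian[OF bV, of psi] bV by simp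
    have harmonic: "laplacian V E psi v = 0" if "v \<in> V" "v \<noteq> b" for v
      using zero grounded_laplacian[OF that(1), of psi] that by simp
    have "psi v * laplacian V E psi v = 0" if "v \<in> V" for v
      using harmonic[OF that] psi_b by (cases "v = b") auto
    then have "(\<Sum>v\<in>V. psi v * laplacian V E psi v) = 0"
      by (rule sum.neutral[OF ballI])
    then have "(\<Sum>(v, w)\<in>arcs V E V. (psi v - psi w)\<^sup>2) = 0"
      using sum_mult_laplacian_eq_energy[OF fin sym, where psi = psi and phi = psi]
      by (simp add: power2_eq_square)
    then have "\<forall>(v, w)\<in>arcs V E V. (psi v - psi w)\<^sup>2 = 0"
      by (subst (asm) sum_nonneg_eq_0_iff[OF finite_arcs[OF fin fin]]) auto
    then have "\<forall>v\<in>V. \<forall>w\<in>V. E v w \<longrightarrow> psi v = psi w"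
      by (auto simp: arcs_def)
    then have "\<forall>v\<in>V. psi v = psi b"
      by (rule conn)
    with psi_b show "\<forall>v\<in>V. psi v = 0"
      by simp
  qed
  then obtain phi where phi: "\<And>v. v \<in> V \<Longrightarrow> (\<Sum>w\<in>V. c v w * phi w) = of_bool (v = a)"
    by blast
  have L: "laplacian V E phi v = of_bool (v = a)" if "v \<in> V" "v \<noteq> b" for v
    using phi[OF that(1)] grounded_laplacian[OF that(1)] that by simp
  text \<open>The row at b is recovered because the total flux out of V vanishes.\<close>
  have "0 = (\<Sum>v\<in>V. laplacian V E phi v)"
    using sum_laplacian_eq_cut_flow[OF fin subset_refl sym, where phi = phi]
    by (simp add: cut_arcs_def)
  also have "\<dots> = laplacian V E phi b + (\<Sum>v\<in>V - {b}. of_bool (v = a))"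
    using fin bV L by (simp add: sum.remove)
  also have "\<dots> = laplacian V E phi b + 1"
    using fin aV ab by (simp add: of_bool_def sum.delta)
  finally have "laplacian V E phi b = -1" by simp
  then have "unit_current_potential V E a b phi"
    unfolding unit_current_potential_def using L ab by auto
  then show ?thesis
    by blast
qed

lemma potential_drop_eq_energy:
  assumes fin: "finite V" and sym: "\<And>u v. E u v \<longleftrightarrow> E v u"
    and aV: "a \<in> V" and bV: "b \<in> V" and ab: "a \<noteq> b"
    and pot: "unit_current_potential V E a b phi"
  shows "phi a - phi b = (1/2) * (\<Sum>(v, w)\<in>arcs V E V. (phi v - phi w)\<^sup>2)"
proof -
  have "(\<Sum>v\<in>V. phi v * laplacian V E phi v) =
      (\<Sum>v\<in>V. (if v = a then phi a else 0) - (if v = b then phi b else 0))"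
    using pot ab by (intro sum.cong) (simp_all add: unit_current_potential_def)
  also have "\<dots> = phi a - phi b"
    using fin aV bV by (simp add: sum_subtractf)
  finally show ?thesis
    using sum_mult_laplacian_eq_energy[OF fin sym, where psi = phi and phi = phi]
    by (simp add: power2_eq_square)
qed

lemma cut_flow_eq:
  assumes fin: "finite V" and sym: "\<And>u v. E u v \<longleftrightarrow> E v u" and S: "S \<subseteq> V"
    and ab: "a \<noteq> b" and pot: "unit_current_potential V E a b phi"
  shows "(\<Sum>(v, w)\<in>cut_arcs V E S. phi v - phi w) = of_bool (a \<in> S) - of_bool (b \<in> S)"
proof -
  have "(\<Sum>v\<in>S. laplacian V E phi v) = (\<Sum>v\<in>S. of_bool (v = a) - of_bool (v = b))"
    using pot ab S by (intro sum.cong) (auto simp: unit_current_potential_def)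
  also have "\<dots> = of_bool (a \<in> S) - of_bool (b \<in> S)"
    using finite_subset[OF S fin] by (simp add: sum_subtractf of_bool_def sum.delta)
  finally show ?thesis
    using sum_laplacian_eq_cut_flow[OF fin S sym] by simp
qed

text \<open>The current crossing a separating cut is one unit; Cauchy-Schwarz spreads it over the
  arcs of the cut.\<close>

lemma cut_energy_ge_inverse_card:
  assumes fin: "finite V" and sym: "\<And>u v. E u v \<longleftrightarrow> E v u" and S: "S \<subseteq> V"
    and ab: "a \<noteq> b" and pot: "unit_current_potential V E a b phi"
    and sep: "(a \<in> S) \<noteq> (b \<in> S)" and card: "card (cut_arcs V E S) \<le> m"
  shows "1 / real m \<le> (\<Sum>(v, w)\<in>cut_arcs V E S. (phi v - phi w)\<^sup>2)"
proof -
  let ?C = "cut_arcs V E S"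
  have "1 = (\<Sum>(v, w)\<in>?C. phi v - phi w)\<^sup>2"
    using cut_flow_eq[OF fin sym S ab pot] sep by auto
  also have "\<dots> \<le> (\<Sum>(v, w)\<in>?C. (phi v - phi w)\<^sup>2) * real (card ?C)"
    using sum_squared_le_sum_of_squares[of "\<lambda>(v, w). phi v - phi w" ?C]
    by (simp add: case_prod_unfold)
  also have "\<dots> \<le> (\<Sum>(v, w)\<in>?C. (phi v - phi w)\<^sup>2) * real m"
    using card by (intro mult_left_mono) (auto intro: sum_nonneg)
  finally have *: "1 \<le> (\<Sum>(v, w)\<in>?C. (phi v - phi w)\<^sup>2) * real m" .
  then have "0 < real m"
    by (cases "m = 0") auto
  with * show ?thesis
    by (simp add: divide_le_eq)
qed

section \<open>The Nash-Williams inequality for level cuts\<close>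

lemma level_cut_arc:
  fixes f :: "'v \<Rightarrow> nat"
  assumes "(v, w) \<in> cut_arcs V E {u \<in> V. f u < k}"
    and lip: "\<And>u v. u \<in> V \<Longrightarrow> v \<in> V \<Longrightarrow> E u v \<Longrightarrow> f v \<le> f u + 1"
  shows "f v + 1 = k \<and> f w = k"
proof -
  have "v \<in> V" "w \<in> V" "E v w" "f v < k" "\<not> f w < k"
    using assms(1) by (auto simp: cut_arcs_def)
  moreover from this have "f w \<le> f v + 1"
    using lip by blast
  ultimately show ?thesis
    by linarith
qed

lemma level_cut_arcs_disjoint:
  fixes f :: "'v \<Rightarrow> nat"
  assumes lip: "\<And>u v. u \<in> V \<Longrightarrow> v \<in> V \<Longrightarrow> E u v \<Longrightarrow> f v \<le> f u + 1"
    and "j \<noteq> k"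
  shows "(cut_arcs V E {v \<in> V. f v < j} \<union> prod.swap ` cut_arcs V E {v \<in> V. f v < j}) \<inter>
    (cut_arcs V E {v \<in> V. f v < k} \<union> prod.swap ` cut_arcs V E {v \<in> V. f v < k}) = {}"
proof -
  let ?C = "\<lambda>l. cut_arcs V E {v \<in> V. f v < l}"
  have levels: "f v + 1 = l \<and> f w = l" if "(v, w) \<in> ?C l" for v w l
    using that lip by (rule level_cut_arc)
  have False if "p \<in> ?C j \<union> prod.swap ` ?C j" "p \<in> ?C k \<union> prod.swap ` ?C k" for p
  proof (cases p)
    case (Pair v w)
    then show False
      using that levels[of v w j] levels[of w v j] levels[of v w k] levels[of w v k] \<open>j \<noteq> k\<close>
      by auto
  qed
  then show ?thesis
    by blast
qed

lemma sum_cut_arcs_both_orientations: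
  fixes g :: "'v \<times> 'v \<Rightarrow> 'a :: comm_semiring_1"
  assumes fin: "finite V" and S: "S \<subseteq> V" and g: "\<And>v w. g (w, v) = g (v, w)"
  shows "sum g (cut_arcs V E S \<union> prod.swap ` cut_arcs V E S) = 2 * sum g (cut_arcs V E S)"
proof -
  have "finite (cut_arcs V E S)"
    using finite_subset[OF cut_arcs_subset_arcs[OF S] finite_arcs[OF fin fin]] .
  moreover have "cut_arcs V E S \<inter> prod.swap ` cut_arcs V E S = {}"
    by (auto simp: cut_arcs_def)
  moreover have "g (prod.swap p) = g p" for p
    by (cases p) (simp add: g)
  then have "sum g (prod.swap ` cut_arcs V E S) = sum g (cut_arcs V E S)"
    by (subst sum.reindex) (auto intro: inj_onI)
  ultimately show ?thesis
    by (simp add: sum.union_disjoint mult_2)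
qed

lemma cut_arcs_both_orientations_subset_arcs:
  assumes sym: "\<And>u v. E u v \<longleftrightarrow> E v u" and S: "S \<subseteq> V"
  shows "cut_arcs V E S \<union> prod.swap ` cut_arcs V E S \<subseteq> arcs V E V"
  using S sym by (auto simp: cut_arcs_def arcs_def)

lemma potential_drop_ge_level_cuts:
  fixes f :: "'v \<Rightarrow> nat"
  assumes fin: "finite V" and sym: "\<And>u v. E u v \<longleftrightarrow> E v u"
    and aV: "a \<in> V" and bV: "b \<in> V" and ab: "a \<noteq> b"
    and pot: "unit_current_potential V E a b phi"
    and lip: "\<And>u v. u \<in> V \<Longrightarrow> v \<in> V \<Longrightarrow> E u v \<Longrightarrow> f v \<le> f u + 1"
    and sep: "\<And>k. 1 \<le> k \<Longrightarrow> k \<le> n \<Longrightarrow> (f a < k) \<noteq> (f b < k)"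
    and cut: "\<And>k. 1 \<le> k \<Longrightarrow> k \<le> n \<Longrightarrow> card (cut_arcs V E {v \<in> V. f v < k}) \<le> c k"
  shows "(\<Sum>k=1..n. 1 / real (c k)) \<le> phi a - phi b"
proof -
  define sq where "sq = (\<lambda>(v, w). (phi v - phi w)\<^sup>2)"
  define P where "P k = cut_arcs V E {v \<in> V. f v < k}" for k
  define Q where "Q k = P k \<union> prod.swap ` P k" for k
  have finD: "finite (arcs V E V)"
    by (rule finite_arcs[OF fin fin])
  have QD: "Q k \<subseteq> arcs V E V" for k
    unfolding Q_def P_def by (rule cut_arcs_both_orientations_subset_arcs[OF sym]) blast
  have lowP: "1 / real (c k) \<le> sum sq (P k)" if k: "1 \<le> k" "k \<le> n" for k
    unfolding P_def sq_def
    by (rule cut_energy_ge_inverse_card[OF fin sym _ ab pot _ cut[OF k]])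
      (use sep[OF k] aV bV in auto)
  have sumQ: "sum sq (Q k) = 2 * sum sq (P k)" for k
    unfolding Q_def P_def
    by (rule sum_cut_arcs_both_orientations[OF fin]) (auto simp: sq_def power2_commute)
  have disj: "Q j \<inter> Q k = {}" if "j \<noteq> k" for j k
    unfolding Q_def P_def using lip that by (rule level_cut_arcs_disjoint)
  have "(\<Sum>k=1..n. 1 / real (c k)) \<le> (\<Sum>k=1..n. (1/2) * sum sq (Q k))"
    using lowP by (intro sum_mono) (auto simp: sumQ)
  also have "\<dots> = (1/2) * sum sq (\<Union>k\<in>{1..n}. Q k)"
    using finite_subset[OF QD finD] disj
    by (simp add: sum.UNION_disjoint sum_distrib_left)
  also have "\<dots> \<le> (1/2) * sum sq (arcs V E V)"
    using QD by (intro mult_left_mono sum_mono2[OF finD]) (auto simp: sq_def)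
  also have "\<dots> = phi a - phi b"
    unfolding sq_def using potential_drop_eq_energy[OF fin sym aV bV ab pot]
    by (simp add: case_prod_unfold)
  finally show ?thesis .
qed

theorem resistance_ge_level_cuts:
  fixes f :: "'v \<Rightarrow> nat"
  assumes fin: "finite V" and sym: "\<And>u v. E u v \<longleftrightarrow> E v u"
    and aV: "a \<in> V" and bV: "b \<in> V" and ab: "a \<noteq> b"
    and conn: "\<And>psi :: _ \<Rightarrow> real. \<forall>v\<in>V. \<forall>w\<in>V. E v w \<longrightarrow> psi v = psi w \<Longrightarrow>
      \<forall>v\<in>V. psi v = psi b"
    and lip: "\<And>u v. u \<in> V \<Longrightarrow> v \<in> V \<Longrightarrow> E u v \<Longrightarrow> f v \<le> f u + 1"
    and sep: "\<And>k. 1 \<le> k \<Longrightarrow> k \<le> n \<Longrightarrow> (f a < k) \<noteq> (f b < k)"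
    and cut: "\<And>k. 1 \<le> k \<Longrightarrow> k \<le> n \<Longrightarrow> card (cut_arcs V E {v \<in> V. f v < k}) \<le> c k"
  shows "(\<Sum>k=1..n. 1 / real (c k)) \<le> resistance V E a b"
proof -
  define phi where "phi = (SOME phi. unit_current_potential V E a b phi)"
  have "unit_current_potential V E a b phi"
    unfolding phi_def
    using unit_current_potential_exists[OF fin sym aV bV ab conn] by (rule someI_ex)
  then show ?thesis
    unfolding resistance_def Let_def phi_def[symmetric]
    by (rule potential_drop_ge_level_cuts[OF fin sym aV bV ab _ lip sep cut])
qed

section \<open>The triangular grid\<close>

lemma finite_tri_V: "finite (tri_V n)"
  by (rule finite_subset[of _ "{0..n} \<times> {0..n}"]) (auto simp: tri_V_def)

lemma tri_E_sym: "tri_E n u v \<longleftrightarrow> tri_E n v u"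
  unfolding tri_E_def by auto

lemma tri_locally_constant_imp_constant:
  fixes psi :: "nat \<times> nat \<Rightarrow> 'a"
  assumes h: "\<forall>v\<in>tri_V n. \<forall>w\<in>tri_V n. tri_E n v w \<longrightarrow> psi v = psi w"
  shows "\<forall>v\<in>tri_V n. psi v = psi (0, 0)"
proof -
  have left_side: "psi (i, 0) = psi (0, 0)" if "i \<le> n" for i
    using that
  proof (induction i)
    case (Suc i)
    have "(i, 0) \<in> tri_V n" "(Suc i, 0) \<in> tri_V n" "tri_E n (i, 0) (Suc i, 0)"
      using Suc.prems by (auto simp: tri_V_def tri_E_def)
    with h have "psi (i, 0) = psi (Suc i, 0)"
      by blast
    with Suc show ?case by simp
  qed simp
  have rows: "psi (i, j) = psi (i, 0)" if "j \<le> i" "i \<le> n" for i j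
    using that
  proof (induction j)
    case (Suc j)
    have "(i, j) \<in> tri_V n" "(i, Suc j) \<in> tri_V n" "tri_E n (i, j) (i, Suc j)"
      using Suc.prems by (auto simp: tri_V_def tri_E_def)
    with h have "psi (i, j) = psi (i, Suc j)"
      by blast
    with Suc show ?case by simp
  qed simp
  show ?thesis
  proof
    fix v
    assume "v \<in> tri_V n"
    then obtain i j where "v = (i, j)" "j \<le> i" "i \<le> n"
      by (auto simp: tri_V_def)
    then show "psi v = psi (0, 0)"
      using rows[of j i] left_side[of i] by simp
  qed
qed

lemma tri_degree_2_imp_corner:
  assumes vV: "v \<in> tri_V n" and dg: "gdegree (tri_V n) (tri_E n) v = 2"
  shows "v \<in> {(0, 0), (n, 0), (n, n)}"
proof (rule ccontr)
  assume not_corner: "v \<notin> {(0, 0), (n, 0), (n, n)}"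
  obtain i j where v: "v = (i, j)" "j \<le> i" "i \<le> n"
    using vV by (cases v) (auto simp: tri_V_def)
  have "\<exists>x y z. x \<noteq> y \<and> x \<noteq> z \<and> y \<noteq> z \<and> {x, y, z} \<subseteq> nbrs (tri_V n) (tri_E n) v"
  proof -
    consider "0 < j" "j < i" | "j = 0" "0 < i" "i < n" | "j = i" "0 < i" "i < n"
      using not_corner v by (cases "j = 0"; cases "j = i"; auto; linarith)
    then show ?thesis
    proof cases
      case 1
      then show ?thesis using v
        by (intro exI[of _ "(i, j - 1)"] exI[of _ "(i, j + 1)"] exI[of _ "(i - 1, j)"])
           (auto simp: nbrs_def tri_E_def tri_V_def)
    next
      case 2
      then show ?thesis using v
        by (intro exI[of _ "(i - 1, 0)"] exI[of _ "(i + 1, 0)"] exI[of _ "(i, 1)"])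
           (auto simp: nbrs_def tri_E_def tri_V_def)
    next
      case 3
      then show ?thesis using v
        by (intro exI[of _ "(i - 1, i - 1)"] exI[of _ "(i, i - 1)"] exI[of _ "(i + 1, i + 1)"])
           (auto simp: nbrs_def tri_E_def tri_V_def)
    qed
  qed
  then obtain x y z where xyz: "x \<noteq> y" "x \<noteq> z" "y \<noteq> z" "{x, y, z} \<subseteq> nbrs (tri_V n) (tri_E n) v"
    by blast
  have "finite (nbrs (tri_V n) (tri_E n) v)"
    using finite_tri_V by (simp add: nbrs_def)
  then have "card {x, y, z} \<le> gdegree (tri_V n) (tri_E n) v"
    unfolding gdegree_def using xyz(4) by (rule card_mono)
  with xyz dg show False by simp
qed

lemma card_tri_row_cut:
  "card (cut_arcs (tri_V n) (tri_E n) {v \<in> tri_V n. fst v < k}) \<le> 2 * k"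
proof -
  let ?A = "(\<lambda>j. ((k - 1, j), (k, j))) ` {0..<k}"
  let ?B = "(\<lambda>j. ((k - 1, j), (k, j + 1))) ` {0..<k}"
  have "cut_arcs (tri_V n) (tri_E n) {v \<in> tri_V n. fst v < k} \<subseteq> ?A \<union> ?B"
  proof (clarify)
    fix i j i' j'
    assume "((i, j), (i', j')) \<in> cut_arcs (tri_V n) (tri_E n) {v \<in> tri_V n. fst v < k}"
      "((i, j), (i', j')) \<notin> ?B"
    then have "i = k - 1" "i' = k" "j' = j" "j < k"
      by (auto simp: cut_arcs_def tri_E_def tri_V_def image_iff)
    then show "((i, j), (i', j')) \<in> ?A" by auto
  qed
  then have "card (cut_arcs (tri_V n) (tri_E n) {v \<in> tri_V n. fst v < k}) \<le> card (?A \<union> ?B)"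
    by (rule card_mono[rotated]) auto
  also have "\<dots> \<le> card ?A + card ?B"
    by (rule card_Un_le)
  also have "\<dots> \<le> k + k"
    by (intro add_mono card_image_le[THEN order_trans]) auto
  finally show ?thesis by simp
qed

lemma card_tri_diagonal_cut:
  assumes "k \<le> n"
  shows "card (cut_arcs (tri_V n) (tri_E n) {v \<in> tri_V n. n - snd v < k}) \<le> 2 * k"
proof -
  let ?A = "(\<lambda>i. ((i, n + 1 - k), (i, n - k))) ` {n + 1 - k..n}"
  let ?B = "(\<lambda>i. ((i, n + 1 - k), (i - 1, n - k))) ` {n + 1 - k..n}"
  have "cut_arcs (tri_V n) (tri_E n) {v \<in> tri_V n. n - snd v < k} \<subseteq> ?A \<union> ?B"
  proof (clarify)
    fix i j i' j'
    assume "((i, j), (i', j')) \<in> cut_arcs (tri_V n) (tri_E n) {v \<in> tri_V n. n - snd v < k}"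
      "((i, j), (i', j')) \<notin> ?B"
    then have "j = n + 1 - k" "j' = n - k" "i' = i" "n + 1 - k \<le> i" "i \<le> n"
      using assms by (auto simp: cut_arcs_def tri_E_def tri_V_def image_iff)
    then show "((i, j), (i', j')) \<in> ?A" by auto
  qed
  then have "card (cut_arcs (tri_V n) (tri_E n) {v \<in> tri_V n. n - snd v < k}) \<le> card (?A \<union> ?B)"
    by (rule card_mono[rotated]) auto
  also have "\<dots> \<le> card ?A + card ?B"
    by (rule card_Un_le)
  also have "\<dots> \<le> k + k"
    using assms by (intro add_mono card_image_le[THEN order_trans]) auto
  finally show ?thesis by simp
qed

lemma tri_corners_separated_by_level_cuts:
  assumes a: "a \<in> {(0, 0), (n, 0), (n, n)}" and b: "b \<in> {(0, 0), (n, 0), (n, n)}"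
    and ab: "a \<noteq> b"
  obtains f :: "nat \<times> nat \<Rightarrow> nat"
  where "\<And>u v. u \<in> tri_V n \<Longrightarrow> v \<in> tri_V n \<Longrightarrow> tri_E n u v \<Longrightarrow> f v \<le> f u + 1"
    and "\<And>k. 1 \<le> k \<Longrightarrow> k \<le> n \<Longrightarrow> (f a < k) \<noteq> (f b < k)"
    and "\<And>k. 1 \<le> k \<Longrightarrow> k \<le> n \<Longrightarrow>
      card (cut_arcs (tri_V n) (tri_E n) {v \<in> tri_V n. f v < k}) \<le> 2 * k"
proof (cases "a = (0, 0) \<or> b = (0, 0)")
  case True
  show ?thesis
  proof (rule that[of fst])
    show "fst v \<le> fst u + 1" if "u \<in> tri_V n" "v \<in> tri_V n" "tri_E n u v" for u v
      using that by (auto simp: tri_E_def)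
    show "(fst a < k) \<noteq> (fst b < k)" if "1 \<le> k" "k \<le> n" for k
      using True a b ab that by auto
  qed (rule card_tri_row_cut)
next
  case False
  show ?thesis
  proof (rule that[of "\<lambda>v. n - snd v"])
    show "n - snd v \<le> n - snd u + 1" if "u \<in> tri_V n" "v \<in> tri_V n" "tri_E n u v" for u v
      using that by (auto simp: tri_E_def tri_V_def)
    show "(n - snd a < k) \<noteq> (n - snd b < k)" if "1 \<le> k" "k \<le> n" for k
      using False a b ab that by auto
    show "card (cut_arcs (tri_V n) (tri_E n) {v \<in> tri_V n. n - snd v < k}) \<le> 2 * k"
      if "1 \<le> k" "k \<le> n" for k
      using card_tri_diagonal_cut[OF that(2)] .
  qed
qed

theorem mainTheorem5:
  fixes n :: nat and a b :: "nat \<times> nat"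
  assumes "n \<ge> 1"
    and "a \<in> tri_V n" and "b \<in> tri_V n" and "a \<noteq> b"
    and "gdegree (tri_V n) (tri_E n) a = 2" and "gdegree (tri_V n) (tri_E n) b = 2"
  shows "resistance (tri_V n) (tri_E n) a b \<ge> (1/2) * (\<Sum>k=1..n. 1 / real k)"
proof -
  note aV = assms(2) and bV = assms(3) and ab = assms(4)
  obtain f where lip: "\<And>u v. u \<in> tri_V n \<Longrightarrow> v \<in> tri_V n \<Longrightarrow> tri_E n u v \<Longrightarrow> f v \<le> f u + 1"
    and sep: "\<And>k. 1 \<le> k \<Longrightarrow> k \<le> n \<Longrightarrow> (f a < k) \<noteq> (f b < k)"
    and cut: "\<And>k. 1 \<le> k \<Longrightarrow> k \<le> n \<Longrightarrow>
      card (cut_arcs (tri_V n) (tri_E n) {v \<in> tri_V n. f v < k}) \<le> 2 * k"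
    using tri_corners_separated_by_level_cuts[OF tri_degree_2_imp_corner[OF aV assms(5)]
        tri_degree_2_imp_corner[OF bV assms(6)] ab] by blast
  have conn: "\<forall>v\<in>tri_V n. psi v = psi b"
    if "\<forall>v\<in>tri_V n. \<forall>w\<in>tri_V n. tri_E n v w \<longrightarrow> psi v = psi w" for psi :: "_ \<Rightarrow> real"
    using tri_locally_constant_imp_constant[OF that] bV by simp
  have "(\<Sum>k=1..n. 1 / real (2 * k)) \<le> resistance (tri_V n) (tri_E n) a b"
    by (rule resistance_ge_level_cuts[OF finite_tri_V tri_E_sym aV bV ab conn lip sep cut])
  then show ?thesis
    by (simp add: sum_distrib_left)
qed

end
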